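(* Let $K\ge3$ be an integer and $\alpha\in(2,+\infty)$. For every $\varepsilon>0$ there exist $p,q\in\operatorname{relint}(\Delta^K)$ such that \[ D_\alpha(p\Vert q)<\varepsilon\cdot\|p-q\|_1^2 . \]
   Context: $\Delta^K=\{p\in[0,1]^K:\sum_k p_k=1\}$, $\operatorname{relint}(\Delta^K)=\Delta^K\cap(0,1)^K$. For $p,q\in(0,+\infty)^K$ and $\alpha\notin\{0,1\}$, $D_\alpha(p\Vert q)=\frac1\alpha\sum_{k=1}^K\frac{p_k^\alpha+(\alpha-1)q_k^\alpha-\alpha p_kq_k^{\alpha-1}}{\alpha-1}$, which is the Bregman divergence of $-S_\alpha$ where $S_\alpha(p)=\frac{\sum_kp_k^\alpha}{\alpha(1-\alpha)}$. $\|x\|_1=\sum_k|x_k|$. *)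

theory Defs
  imports "HOL-Analysis.Analysis"
begin

text \<open>Vectors in R^K are represented as functions nat \<Rightarrow> real, coordinates 0..K-1.\<close>

definition prob_simplex :: "nat \<Rightarrow> (nat \<Rightarrow> real) set" where
  "prob_simplex K = {p. (\<forall>k<K. 0 \<le> p k \<and> p k \<le> 1) \<and> (\<Sum>k<K. p k) = 1}"

definition relint_prob_simplex :: "nat \<Rightarrow> (nat \<Rightarrow> real) set" where
  "relint_prob_simplex K = {p \<in> prob_simplex K. \<forall>k<K. 0 < p k \<and> p k < 1}"

text \<open>alpha-divergence (for positive vectors, alpha not in {0,1}).\<close>
definition alpha_div :: "nat \<Rightarrow> real \<Rightarrow> (nat \<Rightarrow> real) \<Rightarrow> (nat \<Rightarrow> real) \<Rightarrow> real" where
  "alpha_div K \<alpha> p q = (1 / \<alpha>) * (\<Sum>k<K.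
      (p k powr \<alpha> + (\<alpha> - 1) * q k powr \<alpha> - \<alpha> * p k * q k powr (\<alpha> - 1)) / (\<alpha> - 1))"

definition l1_dist :: "nat \<Rightarrow> (nat \<Rightarrow> real) \<Rightarrow> (nat \<Rightarrow> real) \<Rightarrow> real" where
  "l1_dist K p q = (\<Sum>k<K. \<bar>p k - q k\<bar>)"

end

theory Submission
  imports Defs
begin

(* With r = (1 - 3t)/(K - 2), take p = (2t, t, r, ..., r) and q = (t, 2t, r, ..., r).
   Coordinates where p and q agree contribute nothing to D_alpha, and D_alpha is positively
   homogeneous of degree alpha, so D_alpha(p||q) = c t^alpha for a constant c, whereas
   ||p - q||_1 = 2t. Since alpha > 2, c t^alpha = o(t^2) as t -> 0. *)

lemma relint_prob_simplexI:
  assumes "2 \<le> K" and pos: "\<And>k. k < K \<Longrightarrow> 0 < p k" and sum: "(\<Sum>k<K. p k) = 1"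
  shows "p \<in> relint_prob_simplex K"
proof -
  have "p k < 1" if "k < K" for k
  proof -
    define j where "j = (if k = 0 then 1 else 0 :: nat)"
    have j: "j < K" "j \<noteq> k" using \<open>2 \<le> K\<close> by (auto simp: j_def)
    have "p k + p j = (\<Sum>i\<in>{k, j}. p i)" using j by simp
    also have "\<dots> \<le> (\<Sum>i<K. p i)"
      using that j pos by (intro sum_mono2) (auto intro: less_imp_le)
    finally show ?thesis using sum pos[OF \<open>j < K\<close>] by simp
  qed
  then show ?thesis
    using pos sum by (auto simp: relint_prob_simplex_def prob_simplex_def less_imp_le)
qed

definition alpha_div_term :: "real \<Rightarrow> real \<Rightarrow> real \<Rightarrow> real" where
  "alpha_div_term \<alpha> a b = (a powr \<alpha> + (\<alpha> - 1) * b powr \<alpha> - \<alpha> * a * b powr (\<alpha> - 1)) / (\<alpha> - 1)"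

lemma alpha_div_eq_sum_term: "alpha_div K \<alpha> p q = (\<Sum>k<K. alpha_div_term \<alpha> (p k) (q k)) / \<alpha>"
  by (simp add: alpha_div_def alpha_div_term_def)

lemma alpha_div_term_self:
  assumes "0 \<le> a"
  shows "alpha_div_term \<alpha> a a = 0"
proof -
  have "a * a powr (\<alpha> - 1) = a powr \<alpha>"
    using assms by (simp add: powr_mult_base)
  then show ?thesis
    by (simp add: alpha_div_term_def algebra_simps)
qed

lemma alpha_div_term_scale:
  assumes "0 < c" "0 \<le> a" "0 \<le> b"
  shows "alpha_div_term \<alpha> (c * a) (c * b) = c powr \<alpha> * alpha_div_term \<alpha> a b"
proof -
  have "c * c powr (\<alpha> - 1) = c powr \<alpha>"
    using assms by (simp add: powr_mult_base)
  then have "\<alpha> * (c * a) * (c * b) powr (\<alpha> - 1) = c powr \<alpha> * (\<alpha> * a * b powr (\<alpha> - 1))"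
    using assms by (simp add: powr_mult ac_simps)
  then have "alpha_div_term \<alpha> (c * a) (c * b) =
      (c powr \<alpha> * a powr \<alpha> + (\<alpha> - 1) * (c powr \<alpha> * b powr \<alpha>) - c powr \<alpha> * (\<alpha> * a * b powr (\<alpha> - 1))) / (\<alpha> - 1)"
    using assms by (simp add: alpha_div_term_def powr_mult)
  also have "\<dots> = c powr \<alpha> * alpha_div_term \<alpha> a b"
    by (simp add: alpha_div_term_def algebra_simps)
  finally show ?thesis .
qed

lemma alpha_div_scale:
  assumes "0 < c" "\<And>k. k < K \<Longrightarrow> 0 \<le> p k" "\<And>k. k < K \<Longrightarrow> 0 \<le> q k"
  shows "alpha_div K \<alpha> (\<lambda>k. c * p k) (\<lambda>k. c * q k) = c powr \<alpha> * alpha_div K \<alpha> p q"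
  using assms by (simp add: alpha_div_eq_sum_term alpha_div_term_scale sum_distrib_left)

lemma l1_dist_scale: "l1_dist K (\<lambda>k. c * p k) (\<lambda>k. c * q k) = \<bar>c\<bar> * l1_dist K p q"
  by (simp add: l1_dist_def sum_distrib_left abs_mult flip: right_diff_distrib)

definition pad_uniform :: "nat \<Rightarrow> nat \<Rightarrow> (nat \<Rightarrow> real) \<Rightarrow> nat \<Rightarrow> real" where
  "pad_uniform K m x = (\<lambda>k. if k < m then x k else (1 - (\<Sum>j<m. x j)) / real (K - m))"

lemma sum_lessThan_split:
  fixes f :: "nat \<Rightarrow> 'a::comm_monoid_add"
  assumes "m \<le> K"
  shows "(\<Sum>k<K. f k) = (\<Sum>k<m. f k) + (\<Sum>k\<in>{m..<K}. f k)"
  using sum.atLeastLessThan_concat[of 0 m K f] assms by (simp add: atLeast0LessThan)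

lemma sum_pad_uniform:
  assumes "m < K"
  shows "(\<Sum>k<K. pad_uniform K m x k) = 1"
  using assms by (simp add: sum_lessThan_split[of m K] pad_uniform_def)

lemma pad_uniform_in_relint:
  assumes "m < K" "2 \<le> K" "\<And>k. k < m \<Longrightarrow> 0 < x k" "(\<Sum>k<m. x k) < 1"
  shows "pad_uniform K m x \<in> relint_prob_simplex K"
  using assms by (intro relint_prob_simplexI sum_pad_uniform) (auto simp: pad_uniform_def)

lemma alpha_div_pad_uniform:
  assumes "m \<le> K" "(\<Sum>k<m. x k) = (\<Sum>k<m. y k)" "(\<Sum>k<m. y k) \<le> 1"
  shows "alpha_div K \<alpha> (pad_uniform K m x) (pad_uniform K m y) = alpha_div m \<alpha> x y"
  using assms
  by (simp add: alpha_div_eq_sum_term sum_lessThan_split[of m K] pad_uniform_def alpha_div_term_self)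

lemma l1_dist_pad_uniform:
  assumes "m \<le> K" "(\<Sum>k<m. x k) = (\<Sum>k<m. y k)"
  shows "l1_dist K (pad_uniform K m x) (pad_uniform K m y) = l1_dist m x y"
  using assms by (simp add: l1_dist_def sum_lessThan_split[of m K] pad_uniform_def)

lemma alpha_div_pad_uniform_scale:
  assumes "m \<le> K" "0 < t" "\<And>k. k < m \<Longrightarrow> 0 \<le> x k" "\<And>k. k < m \<Longrightarrow> 0 \<le> y k"
    and "(\<Sum>k<m. x k) = (\<Sum>k<m. y k)" "t * (\<Sum>k<m. y k) \<le> 1"
  shows "alpha_div K \<alpha> (pad_uniform K m (\<lambda>k. t * x k)) (pad_uniform K m (\<lambda>k. t * y k)) =
    t powr \<alpha> * alpha_div m \<alpha> x y"
  using assms by (simp add: alpha_div_pad_uniform alpha_div_scale flip: sum_distrib_left)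

lemma l1_dist_pad_uniform_scale:
  assumes "m \<le> K" "0 < t" "(\<Sum>k<m. x k) = (\<Sum>k<m. y k)"
  shows "l1_dist K (pad_uniform K m (\<lambda>k. t * x k)) (pad_uniform K m (\<lambda>k. t * y k)) =
    t * l1_dist m x y"
  using assms by (simp add: l1_dist_pad_uniform l1_dist_scale flip: sum_distrib_left)

lemma eventually_powr_less_square:
  fixes c \<alpha> \<epsilon> :: real
  assumes "\<alpha> > 2" "\<epsilon> > 0"
  shows "\<forall>\<^sub>F t in at_right 0. c * t powr \<alpha> < \<epsilon> * t\<^sup>2"
proof -
  have "((\<lambda>t. t powr (\<alpha> - 2)) \<longlongrightarrow> 0) (at_right 0)"
    using assms
    by (intro tendsto_zero_powrI[where b = "\<alpha> - 2"] tendsto_ident_at tendsto_const eventually_at_rightI) auto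
  then have "((\<lambda>t. c * t powr (\<alpha> - 2)) \<longlongrightarrow> c * 0) (at_right 0)"
    by (rule tendsto_mult_left)
  then have "\<forall>\<^sub>F t in at_right 0. c * t powr (\<alpha> - 2) < \<epsilon>"
    using assms by (auto intro: order_tendstoD)
  moreover have "\<forall>\<^sub>F t in at_right 0. (0::real) < t"
    by (rule eventually_at_right_less)
  ultimately show ?thesis
  proof eventually_elim
    case (elim t)
    then have "c * t powr (\<alpha> - 2) * t\<^sup>2 < \<epsilon> * t\<^sup>2" by simp
    moreover have "t powr \<alpha> = t powr (\<alpha> - 2) * t\<^sup>2"
      using \<open>0 < t\<close> by (simp flip: powr_add powr_numeral)
    ultimately show ?case by (simp add: mult.assoc)
  qed
qed

theorem theorem2:
  fixes K :: nat and \<alpha> \<epsilon> :: real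
  assumes "K \<ge> 3" and "\<alpha> > 2" and "\<epsilon> > 0"
  shows "\<exists>p q. p \<in> relint_prob_simplex K \<and> q \<in> relint_prob_simplex K \<and>
           alpha_div K \<alpha> p q < \<epsilon> * (l1_dist K p q)\<^sup>2"
proof -
  define a b :: "nat \<Rightarrow> real"
    where "a = (\<lambda>k. if k = 0 then 2 else 1)" and "b = (\<lambda>k. if k = 0 then 1 else 2)"
  have ab: "(\<Sum>k<2. a k) = 3" "(\<Sum>k<2. b k) = 3" "l1_dist 2 a b = 2"
    by (simp_all add: a_def b_def l1_dist_def numeral_2_eq_2)
  have "\<forall>\<^sub>F t in at_right 0. alpha_div 2 \<alpha> a b * t powr \<alpha> < (4 * \<epsilon>) * t\<^sup>2 \<and> 0 < t \<and> 3 * t < 1"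
    using assms
    by (intro eventually_conj eventually_powr_less_square)
      (auto simp: eventually_at_right_field intro: exI[of _ "1/3"])
  then obtain t where small: "alpha_div 2 \<alpha> a b * t powr \<alpha> < 4 * \<epsilon> * t\<^sup>2" and t: "0 < t" "3 * t < 1"
    using eventually_happens'[OF trivial_limit_at_right_real] by blast
  let ?p = "pad_uniform K 2 (\<lambda>k. t * a k)" and ?q = "pad_uniform K 2 (\<lambda>k. t * b k)"
  have "?p \<in> relint_prob_simplex K" "?q \<in> relint_prob_simplex K"
    using assms t ab by (auto intro!: pad_uniform_in_relint simp: a_def b_def simp flip: sum_distrib_left)
  moreover have "alpha_div K \<alpha> ?p ?q = t powr \<alpha> * alpha_div 2 \<alpha> a b"
    using assms t ab by (intro alpha_div_pad_uniform_scale) (auto simp: a_def b_def)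
  moreover have "l1_dist K ?p ?q = 2 * t"
    using assms t ab by (simp add: l1_dist_pad_uniform_scale)
  ultimately show ?thesis
    using small by (intro exI[of _ ?p] exI[of _ ?q]) (simp add: power_mult_distrib ac_simps)
qed

end
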